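(* If $(G_1,\sigma_1),\dots,(G_k,\sigma_k)$ are signed graphs, then $\chi_s((G_1,\sigma_1)\,\square\cdots\square\,(G_k,\sigma_k))\le\prod_{i=1}^k\chi_s(G_i,\sigma_i)$.
   Context: A signed graph $(G,\sigma)$ is a simple loopless undirected graph with a signature $\sigma:E(G)\to\{+1,-1\}$. Switching a vertex negates the signs of its incident edges; two signatures are equivalent if one is obtained from the other by switching a set of vertices. A homomorphism of $(G,\sigma)$ to $(H,\pi)$ is a graph homomorphism $\varphi:G\to H$ for which there is a signature $\sigma'$ equivalent to $\sigma$ with $\pi(\varphi(u)\varphi(v))=\sigma'(uv)$ for every edge $uv$; $\chi_s(G,\sigma)$ is the smallest order of a signed graph to which $(G,\sigma)$ admits a homomorphism. The Cartesian product $(G,\sigma)\,\square\,(H,\pi)$ is the signed graph on $G\,\square\,H$ where $(u,v_1)(u,v_2)$ has sign $\pi(v_1v_2)$ and $(u_1,v)(u_2,v)$ has sign $\sigma(u_1u_2)$. *)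

theory Defs
  imports Main
begin

record 'a sgraph =
  verts :: "'a set"
  edges :: "'a set set"
  sgn :: "'a set \<Rightarrow> int"

definition signed_graph :: "('a, 'b) sgraph_scheme \<Rightarrow> bool" where
  "signed_graph G \<longleftrightarrow> finite (verts G)
     \<and> (\<forall>e\<in>edges G. \<exists>u v. u \<noteq> v \<and> u \<in> verts G \<and> v \<in> verts G \<and> e = {u, v})
     \<and> (\<forall>e\<in>edges G. sgn G e = 1 \<or> sgn G e = -1)"

definition switch :: "('a set \<Rightarrow> int) \<Rightarrow> 'a set \<Rightarrow> 'a set \<Rightarrow> int" where
  "switch \<sigma> X e = (if card (e \<inter> X) = 1 then - \<sigma> e else \<sigma> e)"

definition sg_hom :: "'a sgraph \<Rightarrow> 'b sgraph \<Rightarrow> ('a \<Rightarrow> 'b) \<Rightarrow> bool" where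
  "sg_hom G H \<phi> \<longleftrightarrow> (\<forall>v\<in>verts G. \<phi> v \<in> verts H)
     \<and> (\<forall>u v. {u, v} \<in> edges G \<longrightarrow> {\<phi> u, \<phi> v} \<in> edges H)
     \<and> (\<exists>X\<subseteq>verts G. \<forall>u v. {u, v} \<in> edges G \<longrightarrow>
            sgn H {\<phi> u, \<phi> v} = switch (sgn G) X {u, v})"

text \<open>Signed chromatic number: smallest order of a signed graph admitting a
  homomorphism from G (targets taken on vertex type nat, which loses nothing
  for finite graphs).\<close>
definition chi_s :: "'a sgraph \<Rightarrow> nat" where
  "chi_s G = (LEAST n. \<exists>(H :: nat sgraph) \<phi>. signed_graph H \<and> card (verts H) = n \<and> sg_hom G H \<phi>)"

definition cprod :: "'a sgraph list \<Rightarrow> 'a list sgraph" where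
  "cprod Gs = (let
     V = {xs. length xs = length Gs \<and> (\<forall>i<length Gs. xs ! i \<in> verts (Gs ! i))};
     E = {{xs, ys} | xs ys i. xs \<in> V \<and> ys \<in> V \<and> i < length Gs
            \<and> {xs ! i, ys ! i} \<in> edges (Gs ! i)
            \<and> (\<forall>j<length Gs. j \<noteq> i \<longrightarrow> xs ! j = ys ! j)}
   in \<lparr> verts = V, edges = E,
        sgn = (\<lambda>e. if e \<in> E then
                   (THE s. \<exists>xs ys i. e = {xs, ys} \<and> i < length Gs \<and> xs ! i \<noteq> ys ! i
                           \<and> s = sgn (Gs ! i) {xs ! i, ys ! i})
                 else 1) \<rparr>)"

end

theory Submission
  imports Defs
begin

(*
  For each factor G_i pick a homomorphism phi_i to a signed graph H_i of order chi_s(G_i),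
  valid after switching a set X_i of vertices of G_i.  The coordinatewise map
  (x_1, ..., x_k) |-> (phi_1 x_1, ..., phi_k x_k) maps edges of the product to edges of the
  product of the H_i, which has prod_i chi_s(G_i) vertices.  For the signs, switch in the
  product the vertices having an odd number of coordinates x_i in X_i: an edge in direction i
  changes only coordinate i, so its endpoints are separated by this set exactly when their
  i-th coordinates are separated by X_i.
*)

lemma card_lists_nth_in:
  "card {xs. length xs = k \<and> (\<forall>i<k. xs ! i \<in> A i)} = (\<Prod>i<k. card (A i))"
proof (induction k arbitrary: A)
  case 0
  then show ?case by simp
next
  case (Suc k)
  let ?tails = "{ys. length ys = k \<and> (\<forall>i<k. ys ! i \<in> A (Suc i))}"
  have "{xs. length xs = Suc k \<and> (\<forall>i<Suc k. xs ! i \<in> A i)} = (\<lambda>(x, ys). x # ys) ` (A 0 \<times> ?tails)"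
  proof (intro set_eqI iffI)
    fix xs assume "xs \<in> {xs. length xs = Suc k \<and> (\<forall>i<Suc k. xs ! i \<in> A i)}"
    then show "xs \<in> (\<lambda>(x, ys). x # ys) ` (A 0 \<times> ?tails)"
      by (cases xs) (auto simp: image_iff)
  qed (auto simp: less_Suc_eq_0_disj)
  moreover have "inj_on (\<lambda>(x, ys). x # ys) (A 0 \<times> ?tails)"
    by (auto simp: inj_on_def)
  ultimately show ?case
    by (simp add: card_image card_cartesian_product Suc prod.lessThan_Suc_shift del: prod.lessThan_Suc)
qed

lemma finite_lists_nth_in:
  assumes "\<forall>i<k. finite (A i)"
  shows "finite {xs. length xs = k \<and> (\<forall>i<k. xs ! i \<in> A i)}"
proof (rule finite_subset)
  show "{xs. length xs = k \<and> (\<forall>i<k. xs ! i \<in> A i)} \<subseteq> {xs. set xs \<subseteq> (\<Union>i<k. A i) \<and> length xs = k}"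
    by (force simp: in_set_conv_nth)
  show "finite {xs. set xs \<subseteq> (\<Union>i<k. A i) \<and> length xs = k}"
    using assms by (simp add: finite_lists_length_eq)
qed

lemma switch_doubleton:
  "a \<noteq> b \<Longrightarrow> switch \<sigma> X {a, b} = (if (a \<in> X) \<noteq> (b \<in> X) then - \<sigma> {a, b} else \<sigma> {a, b})"
  by (cases "a \<in> X"; cases "b \<in> X") (auto simp: switch_def)

lemma signed_graph_finite: "signed_graph G \<Longrightarrow> finite (verts G)"
  by (simp add: signed_graph_def)

lemma signed_graph_edgeE:
  assumes "signed_graph G" "e \<in> edges G"
  obtains a b where "e = {a, b}" "a \<noteq> b" "a \<in> verts G" "b \<in> verts G"
  using assms unfolding signed_graph_def by blast

lemma signed_graph_edgeD:
  "signed_graph G \<Longrightarrow> {a, b} \<in> edges G \<Longrightarrow> a \<noteq> b \<and> a \<in> verts G \<and> b \<in> verts G"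
  by (erule signed_graph_edgeE) (auto simp: doubleton_eq_iff)

lemma signed_graph_sgn: "signed_graph G \<Longrightarrow> e \<in> edges G \<Longrightarrow> sgn G e = 1 \<or> sgn G e = -1"
  by (simp add: signed_graph_def)

lemma signed_graphI:
  assumes "finite (verts G)"
    and "\<And>e. e \<in> edges G \<Longrightarrow> \<exists>a b. a \<noteq> b \<and> a \<in> verts G \<and> b \<in> verts G \<and> e = {a, b}"
    and "\<And>e. e \<in> edges G \<Longrightarrow> sgn G e = 1 \<or> sgn G e = -1"
  shows "signed_graph G"
  unfolding signed_graph_def using assms by blast

lemma sg_homI:
  assumes "\<And>v. v \<in> verts G \<Longrightarrow> \<phi> v \<in> verts H"
    and "\<And>u v. {u, v} \<in> edges G \<Longrightarrow> {\<phi> u, \<phi> v} \<in> edges H"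
    and "X \<subseteq> verts G"
    and "\<And>u v. {u, v} \<in> edges G \<Longrightarrow> sgn H {\<phi> u, \<phi> v} = switch (sgn G) X {u, v}"
  shows "sg_hom G H \<phi>"
  unfolding sg_hom_def using assms by blast

lemma sg_hom_vertsD: "sg_hom G H \<phi> \<Longrightarrow> v \<in> verts G \<Longrightarrow> \<phi> v \<in> verts H"
  unfolding sg_hom_def by blast

lemma sg_hom_edgesD: "sg_hom G H \<phi> \<Longrightarrow> {u, v} \<in> edges G \<Longrightarrow> {\<phi> u, \<phi> v} \<in> edges H"
  unfolding sg_hom_def by blast

lemma sg_hom_switchE:
  assumes "sg_hom G H \<phi>"
  obtains X where "X \<subseteq> verts G"
    "\<And>u v. {u, v} \<in> edges G \<Longrightarrow> sgn H {\<phi> u, \<phi> v} = switch (sgn G) X {u, v}"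
  using assms unfolding sg_hom_def by blast

lemma sg_hom_id: "sg_hom G G id"
  by (rule sg_homI[where X = "{}"]) (simp_all add: switch_def)

definition rename_sgraph :: "('a \<Rightarrow> 'b) \<Rightarrow> 'a sgraph \<Rightarrow> 'b sgraph" where
  "rename_sgraph f H = \<lparr>verts = f ` verts H, edges = image f ` edges H,
     sgn = (\<lambda>e. sgn H {x \<in> verts H. f x \<in> e})\<rparr>"

lemma sgn_rename_sgraph:
  assumes "inj_on f (verts H)" "a \<in> verts H" "b \<in> verts H"
  shows "sgn (rename_sgraph f H) {f a, f b} = sgn H {a, b}"
proof -
  have "{x \<in> verts H. f x \<in> {f a, f b}} = {a, b}"
    using assms by (auto simp: inj_on_eq_iff)
  then show ?thesis by (simp add: rename_sgraph_def)
qed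

lemma card_verts_rename_sgraph:
  "inj_on f (verts H) \<Longrightarrow> card (verts (rename_sgraph f H)) = card (verts H)"
  by (simp add: rename_sgraph_def card_image)

lemma signed_graph_rename_sgraph:
  assumes H: "signed_graph H" and f: "inj_on f (verts H)"
  shows "signed_graph (rename_sgraph f H)"
proof (rule signed_graphI)
  show "finite (verts (rename_sgraph f H))"
    using signed_graph_finite[OF H] by (simp add: rename_sgraph_def)
next
  fix e assume "e \<in> edges (rename_sgraph f H)"
  then obtain e0 where e0: "e0 \<in> edges H" "e = f ` e0"
    by (auto simp: rename_sgraph_def)
  then obtain a b where ab: "e0 = {a, b}" "a \<noteq> b" "a \<in> verts H" "b \<in> verts H"
    using H by (blast elim: signed_graph_edgeE)
  have "f a \<noteq> f b"
    using ab f by (simp add: inj_on_eq_iff)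
  then show "\<exists>u v. u \<noteq> v \<and> u \<in> verts (rename_sgraph f H) \<and> v \<in> verts (rename_sgraph f H) \<and> e = {u, v}"
    using ab e0(2) by (auto simp: rename_sgraph_def)
  show "sgn (rename_sgraph f H) e = 1 \<or> sgn (rename_sgraph f H) e = -1"
    using signed_graph_sgn[OF H e0(1)] ab e0(2) by (simp add: sgn_rename_sgraph[OF f])
qed

lemma sg_hom_rename_sgraph:
  assumes H: "signed_graph H" and f: "inj_on f (verts H)" and \<phi>: "sg_hom G H \<phi>"
  shows "sg_hom G (rename_sgraph f H) (f \<circ> \<phi>)"
proof -
  obtain X where X: "X \<subseteq> verts G"
    "\<And>u v. {u, v} \<in> edges G \<Longrightarrow> sgn H {\<phi> u, \<phi> v} = switch (sgn G) X {u, v}"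
    using sg_hom_switchE[OF \<phi>] by blast
  show ?thesis
  proof (rule sg_homI[OF _ _ X(1)])
    fix v assume "v \<in> verts G"
    then show "(f \<circ> \<phi>) v \<in> verts (rename_sgraph f H)"
      using sg_hom_vertsD[OF \<phi>] by (simp add: rename_sgraph_def)
  next
    fix u v assume uv: "{u, v} \<in> edges G"
    then have e: "{\<phi> u, \<phi> v} \<in> edges H"
      by (rule sg_hom_edgesD[OF \<phi>])
    then have "f ` {\<phi> u, \<phi> v} \<in> edges (rename_sgraph f H)"
      unfolding rename_sgraph_def sgraph.select_convs by (rule imageI)
    then show "{(f \<circ> \<phi>) u, (f \<circ> \<phi>) v} \<in> edges (rename_sgraph f H)"
      by simp
    have "\<phi> u \<in> verts H" "\<phi> v \<in> verts H"
      using signed_graph_edgeD[OF H e] by blast+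
    then show "sgn (rename_sgraph f H) {(f \<circ> \<phi>) u, (f \<circ> \<phi>) v} = switch (sgn G) X {u, v}"
      using X(2)[OF uv] by (simp add: sgn_rename_sgraph[OF f])
  qed
qed

lemma sg_hom_nat_target:
  fixes H :: "'b sgraph"
  assumes H: "signed_graph H" and \<phi>: "sg_hom G H \<phi>"
  shows "\<exists>(H' :: nat sgraph) \<psi>. signed_graph H' \<and> card (verts H') = card (verts H) \<and> sg_hom G H' \<psi>"
proof -
  obtain f :: "'b \<Rightarrow> nat" where f: "inj_on f (verts H)"
    using finite_imp_inj_to_nat_seg[OF signed_graph_finite[OF H]] by blast
  show ?thesis
    using signed_graph_rename_sgraph[OF H f] card_verts_rename_sgraph[OF f]
      sg_hom_rename_sgraph[OF H f \<phi>] by blast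
qed

lemma chi_s_le:
  fixes H :: "'b sgraph"
  assumes "signed_graph H" "sg_hom G H \<phi>"
  shows "chi_s G \<le> card (verts H)"
  unfolding chi_s_def using sg_hom_nat_target[OF assms] by (rule Least_le)

lemma chi_s_attained:
  assumes "signed_graph G"
  shows "\<exists>(H :: nat sgraph) \<phi>. signed_graph H \<and> card (verts H) = chi_s G \<and> sg_hom G H \<phi>"
proof -
  have "\<exists>n. \<exists>(H :: nat sgraph) \<phi>. signed_graph H \<and> card (verts H) = n \<and> sg_hom G H \<phi>"
    using sg_hom_nat_target[OF assms sg_hom_id] by blast
  then show ?thesis
    unfolding chi_s_def by (rule LeastI_ex)
qed

lemma verts_cprod:
  "verts (cprod Gs) = {xs. length xs = length Gs \<and> (\<forall>i<length Gs. xs ! i \<in> verts (Gs ! i))}"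
  by (simp add: cprod_def Let_def)

lemma edges_cprod:
  "edges (cprod Gs) = {{xs, ys} | xs ys i. xs \<in> verts (cprod Gs) \<and> ys \<in> verts (cprod Gs)
     \<and> i < length Gs \<and> {xs ! i, ys ! i} \<in> edges (Gs ! i)
     \<and> (\<forall>j<length Gs. j \<noteq> i \<longrightarrow> xs ! j = ys ! j)}"
  by (simp add: cprod_def Let_def)

lemma cprod_edgeI:
  assumes "xs \<in> verts (cprod Gs)" "ys \<in> verts (cprod Gs)" "i < length Gs"
    "{xs ! i, ys ! i} \<in> edges (Gs ! i)" "\<forall>j<length Gs. j \<noteq> i \<longrightarrow> xs ! j = ys ! j"
  shows "{xs, ys} \<in> edges (cprod Gs)"
  unfolding edges_cprod using assms by blast

lemma cprod_edgeE:
  assumes "e \<in> edges (cprod Gs)"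
  obtains xs ys i where "e = {xs, ys}" "xs \<in> verts (cprod Gs)" "ys \<in> verts (cprod Gs)" "i < length Gs"
    "{xs ! i, ys ! i} \<in> edges (Gs ! i)" "\<forall>j<length Gs. j \<noteq> i \<longrightarrow> xs ! j = ys ! j"
  using assms unfolding edges_cprod by blast

lemma sgn_cprod:
  assumes "xs \<in> verts (cprod Gs)" "ys \<in> verts (cprod Gs)" "i < length Gs"
    "{xs ! i, ys ! i} \<in> edges (Gs ! i)" "\<forall>j<length Gs. j \<noteq> i \<longrightarrow> xs ! j = ys ! j"
    "xs ! i \<noteq> ys ! i"
  shows "sgn (cprod Gs) {xs, ys} = sgn (Gs ! i) {xs ! i, ys ! i}"
proof -
  have "(THE s. \<exists>xs' ys' i'. {xs, ys} = {xs', ys'} \<and> i' < length Gs \<and> xs' ! i' \<noteq> ys' ! i'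
            \<and> s = sgn (Gs ! i') {xs' ! i', ys' ! i'}) = sgn (Gs ! i) {xs ! i, ys ! i}"
  proof (rule the_equality)
    fix s assume "\<exists>xs' ys' i'. {xs, ys} = {xs', ys'} \<and> i' < length Gs \<and> xs' ! i' \<noteq> ys' ! i'
                   \<and> s = sgn (Gs ! i') {xs' ! i', ys' ! i'}"
    then obtain xs' ys' i' where h: "{xs, ys} = {xs', ys'}" "i' < length Gs" "xs' ! i' \<noteq> ys' ! i'"
      "s = sgn (Gs ! i') {xs' ! i', ys' ! i'}" by blast
    from h(1) have swap: "xs' = xs \<and> ys' = ys \<or> xs' = ys \<and> ys' = xs"
      by (auto simp: doubleton_eq_iff)
    then have "i' = i"
      using h(2,3) assms(5) by metis
    then show "s = sgn (Gs ! i) {xs ! i, ys ! i}"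
      using swap h(4) by (auto simp: insert_commute)
  qed (use assms in blast)
  moreover have "{xs, ys} \<in> edges (cprod Gs)"
    using assms(1-5) by (rule cprod_edgeI)
  ultimately show ?thesis
    by (simp add: cprod_def Let_def)
qed

lemma signed_graph_cprod:
  assumes "\<forall>G\<in>set Gs. signed_graph G"
  shows "signed_graph (cprod Gs)"
proof -
  have factor: "signed_graph (Gs ! i)" if "i < length Gs" for i
    using assms that by simp
  show ?thesis
  proof (rule signed_graphI)
    show "finite (verts (cprod Gs))"
      unfolding verts_cprod by (intro finite_lists_nth_in allI impI signed_graph_finite factor)
  next
    fix e assume "e \<in> edges (cprod Gs)"
    then obtain xs ys i where e: "e = {xs, ys}" "xs \<in> verts (cprod Gs)" "ys \<in> verts (cprod Gs)"
      "i < length Gs" "{xs ! i, ys ! i} \<in> edges (Gs ! i)" "\<forall>j<length Gs. j \<noteq> i \<longrightarrow> xs ! j = ys ! j"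
      by (rule cprod_edgeE)
    have Gi: "signed_graph (Gs ! i)"
      using factor e(4) .
    have "xs ! i \<noteq> ys ! i"
      using signed_graph_edgeD[OF Gi e(5)] by blast
    then have "xs \<noteq> ys"
      by blast
    then show "\<exists>a b. a \<noteq> b \<and> a \<in> verts (cprod Gs) \<and> b \<in> verts (cprod Gs) \<and> e = {a, b}"
      using e(1-3) by blast
    show "sgn (cprod Gs) e = 1 \<or> sgn (cprod Gs) e = -1"
      using signed_graph_sgn[OF Gi e(5)] sgn_cprod[OF e(2-6) \<open>xs ! i \<noteq> ys ! i\<close>] e(1)
      by simp
  qed
qed

lemma card_verts_cprod: "card (verts (cprod Gs)) = (\<Prod>i<length Gs. card (verts (Gs ! i)))"
  unfolding verts_cprod by (rule card_lists_nth_in)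

lemma card_Collect_less_split:
  fixes i k :: nat
  assumes "i < k"
  shows "card {j. j < k \<and> P j} = card {j. j < k \<and> j \<noteq> i \<and> P j} + (if P i then 1 else 0)"
proof (cases "P i")
  case True
  then have "{j. j < k \<and> P j} = insert i {j. j < k \<and> j \<noteq> i \<and> P j}"
    using assms by auto
  then show ?thesis
    using True by simp
next
  case False
  then have "{j. j < k \<and> P j} = {j. j < k \<and> j \<noteq> i \<and> P j}"
    by auto
  then show ?thesis
    using False by simp
qed

definition odd_coords :: "(nat \<Rightarrow> 'a set) \<Rightarrow> nat \<Rightarrow> 'a list set" where
  "odd_coords X k = {xs. odd (card {j. j < k \<and> xs ! j \<in> X j})}"

lemma odd_coords_flip:
  assumes "i < k" "\<forall>j<k. j \<noteq> i \<longrightarrow> xs ! j = ys ! j"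
  shows "(xs \<in> odd_coords X k) \<noteq> (ys \<in> odd_coords X k) \<longleftrightarrow> (xs ! i \<in> X i) \<noteq> (ys ! i \<in> X i)"
proof -
  have "{j. j < k \<and> j \<noteq> i \<and> xs ! j \<in> X j} = {j. j < k \<and> j \<noteq> i \<and> ys ! j \<in> X j}"
    using assms(2) by auto
  then show ?thesis
    unfolding odd_coords_def
    using card_Collect_less_split[OF assms(1), of "\<lambda>j. xs ! j \<in> X j"]
      card_Collect_less_split[OF assms(1), of "\<lambda>j. ys ! j \<in> X j"]
    by auto
qed

lemma switch_cprod_odd_coords:
  assumes "xs \<in> verts (cprod Gs)" "ys \<in> verts (cprod Gs)" "i < length Gs"
    "{xs ! i, ys ! i} \<in> edges (Gs ! i)" "\<forall>j<length Gs. j \<noteq> i \<longrightarrow> xs ! j = ys ! j"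
    "xs ! i \<noteq> ys ! i"
  shows "switch (sgn (cprod Gs)) (verts (cprod Gs) \<inter> odd_coords X (length Gs)) {xs, ys}
    = switch (sgn (Gs ! i)) (X i) {xs ! i, ys ! i}"
proof -
  let ?S = "verts (cprod Gs) \<inter> odd_coords X (length Gs)"
  have "xs \<noteq> ys"
    using assms(6) by auto
  have flip: "((xs \<in> ?S) \<noteq> (ys \<in> ?S)) = ((xs ! i \<in> X i) \<noteq> (ys ! i \<in> X i))"
    using odd_coords_flip[OF assms(3,5)] assms(1,2) by simp
  show ?thesis
    by (simp only: switch_doubleton[OF \<open>xs \<noteq> ys\<close>] switch_doubleton[OF assms(6)] flip
        sgn_cprod[OF assms])
qed

definition map_coords :: "(nat \<Rightarrow> 'a \<Rightarrow> 'b) \<Rightarrow> nat \<Rightarrow> 'a list \<Rightarrow> 'b list" where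
  "map_coords \<phi> k xs = map (\<lambda>i. \<phi> i (xs ! i)) [0..<k]"

lemma length_map_coords [simp]: "length (map_coords \<phi> k xs) = k"
  by (simp add: map_coords_def)

lemma nth_map_coords [simp]: "i < k \<Longrightarrow> map_coords \<phi> k xs ! i = \<phi> i (xs ! i)"
  by (simp add: map_coords_def)

lemma map_coords_in_verts_cprod:
  assumes "length Hs = length Gs" "\<And>i. i < length Gs \<Longrightarrow> sg_hom (Gs ! i) (Hs ! i) (\<phi> i)"
    and "xs \<in> verts (cprod Gs)"
  shows "map_coords \<phi> (length Gs) xs \<in> verts (cprod Hs)"
  using assms(1,3) by (auto simp: verts_cprod intro: sg_hom_vertsD[OF assms(2)])

lemma map_coords_cprod_edge:
  assumes len: "length Hs = length Gs"
    and Gs_signed: "\<forall>G\<in>set Gs. signed_graph G" and Hs_signed: "\<forall>H\<in>set Hs. signed_graph H"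
    and hom: "\<And>i. i < length Gs \<Longrightarrow> sg_hom (Gs ! i) (Hs ! i) (\<phi> i)"
    and X: "\<And>i u v. i < length Gs \<Longrightarrow> {u, v} \<in> edges (Gs ! i) \<Longrightarrow>
      sgn (Hs ! i) {\<phi> i u, \<phi> i v} = switch (sgn (Gs ! i)) (X i) {u, v}"
    and e: "xs \<in> verts (cprod Gs)" "ys \<in> verts (cprod Gs)" "i < length Gs"
      "{xs ! i, ys ! i} \<in> edges (Gs ! i)" "\<forall>j<length Gs. j \<noteq> i \<longrightarrow> xs ! j = ys ! j"
  defines "\<Phi> \<equiv> map_coords \<phi> (length Gs)"
  shows "{\<Phi> xs, \<Phi> ys} \<in> edges (cprod Hs)"
    and "sgn (cprod Hs) {\<Phi> xs, \<Phi> ys}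
      = switch (sgn (cprod Gs)) (verts (cprod Gs) \<inter> odd_coords X (length Gs)) {xs, ys}"
proof -
  have Gi: "signed_graph (Gs ! i)" and Hi: "signed_graph (Hs ! i)"
    using Gs_signed Hs_signed len e(3) by simp_all
  have ne: "xs ! i \<noteq> ys ! i"
    using signed_graph_edgeD[OF Gi e(4)] by blast
  have verts: "\<Phi> xs \<in> verts (cprod Hs)" "\<Phi> ys \<in> verts (cprod Hs)"
    unfolding \<Phi>_def using map_coords_in_verts_cprod[OF len hom] e(1,2) by blast+
  have iH: "i < length Hs"
    using e(3) len by simp
  have eH: "{\<Phi> xs ! i, \<Phi> ys ! i} \<in> edges (Hs ! i)"
    using sg_hom_edgesD[OF hom[OF e(3)] e(4)] e(3) by (simp add: \<Phi>_def)
  have agreeH: "\<forall>j<length Hs. j \<noteq> i \<longrightarrow> \<Phi> xs ! j = \<Phi> ys ! j"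
    using e(5) len by (simp add: \<Phi>_def)
  show "{\<Phi> xs, \<Phi> ys} \<in> edges (cprod Hs)"
    using verts iH eH agreeH by (rule cprod_edgeI)
  have neH: "\<Phi> xs ! i \<noteq> \<Phi> ys ! i"
    using signed_graph_edgeD[OF Hi eH] by blast
  have "sgn (cprod Hs) {\<Phi> xs, \<Phi> ys} = sgn (Hs ! i) {\<Phi> xs ! i, \<Phi> ys ! i}"
    using verts iH eH agreeH neH by (rule sgn_cprod)
  also have "\<dots> = switch (sgn (Gs ! i)) (X i) {xs ! i, ys ! i}"
    using X[OF e(3,4)] e(3) by (simp add: \<Phi>_def)
  also have "\<dots> = switch (sgn (cprod Gs)) (verts (cprod Gs) \<inter> odd_coords X (length Gs)) {xs, ys}"
    using switch_cprod_odd_coords[OF e ne] by simp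
  finally show "sgn (cprod Hs) {\<Phi> xs, \<Phi> ys}
      = switch (sgn (cprod Gs)) (verts (cprod Gs) \<inter> odd_coords X (length Gs)) {xs, ys}" .
qed

lemma sg_hom_cprod:
  assumes len: "length Hs = length Gs"
    and Gs_signed: "\<forall>G\<in>set Gs. signed_graph G" and Hs_signed: "\<forall>H\<in>set Hs. signed_graph H"
    and hom: "\<And>i. i < length Gs \<Longrightarrow> sg_hom (Gs ! i) (Hs ! i) (\<phi> i)"
  shows "sg_hom (cprod Gs) (cprod Hs) (map_coords \<phi> (length Gs))"
proof -
  have "\<forall>i. \<exists>Xi. i < length Gs \<longrightarrow> (\<forall>u v. {u, v} \<in> edges (Gs ! i) \<longrightarrow>
      sgn (Hs ! i) {\<phi> i u, \<phi> i v} = switch (sgn (Gs ! i)) Xi {u, v})"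
    using hom by (metis sg_hom_switchE)
  then obtain X where X: "\<And>i u v. i < length Gs \<Longrightarrow> {u, v} \<in> edges (Gs ! i) \<Longrightarrow>
      sgn (Hs ! i) {\<phi> i u, \<phi> i v} = switch (sgn (Gs ! i)) (X i) {u, v}"
    by metis
  let ?\<Phi> = "map_coords \<phi> (length Gs)" and ?S = "verts (cprod Gs) \<inter> odd_coords X (length Gs)"
  show ?thesis
  proof (rule sg_homI[where X = ?S])
    fix u v assume "{u, v} \<in> edges (cprod Gs)"
    then obtain xs ys i where e: "{u, v} = {xs, ys}" "xs \<in> verts (cprod Gs)" "ys \<in> verts (cprod Gs)"
      "i < length Gs" "{xs ! i, ys ! i} \<in> edges (Gs ! i)" "\<forall>j<length Gs. j \<noteq> i \<longrightarrow> xs ! j = ys ! j"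
      by (rule cprod_edgeE)
    have "{?\<Phi> u, ?\<Phi> v} = {?\<Phi> xs, ?\<Phi> ys}"
      using e(1) by (auto simp: doubleton_eq_iff)
    then show "{?\<Phi> u, ?\<Phi> v} \<in> edges (cprod Hs)"
      and "sgn (cprod Hs) {?\<Phi> u, ?\<Phi> v} = switch (sgn (cprod Gs)) ?S {u, v}"
      using map_coords_cprod_edge[OF len Gs_signed Hs_signed hom X e(2-6)] e(1) by simp_all
  qed (use map_coords_in_verts_cprod[OF len hom] in auto)
qed

lemma chi_s_attained_list:
  assumes "\<forall>G\<in>set Gs. signed_graph G"
  obtains Hs :: "nat sgraph list" and \<phi> where "length Hs = length Gs" "\<forall>H\<in>set Hs. signed_graph H"
    "\<And>i. i < length Gs \<Longrightarrow> card (verts (Hs ! i)) = chi_s (Gs ! i)"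
    "\<And>i. i < length Gs \<Longrightarrow> sg_hom (Gs ! i) (Hs ! i) (\<phi> i)"
proof -
  have "signed_graph (Gs ! i)" if "i < length Gs" for i
    using assms that by simp
  then have witnesses: "\<forall>i. \<exists>(H :: nat sgraph) \<phi>. i < length Gs \<longrightarrow>
      signed_graph H \<and> card (verts H) = chi_s (Gs ! i) \<and> sg_hom (Gs ! i) H \<phi>"
    using chi_s_attained by blast
  obtain H :: "nat \<Rightarrow> nat sgraph" where H_ex: "\<forall>i. \<exists>\<phi>. i < length Gs \<longrightarrow>
      signed_graph (H i) \<and> card (verts (H i)) = chi_s (Gs ! i) \<and> sg_hom (Gs ! i) (H i) \<phi>"
    using choice[OF witnesses] ..
  obtain \<phi> where H: "\<And>i. i < length Gs \<Longrightarrow>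
      signed_graph (H i) \<and> card (verts (H i)) = chi_s (Gs ! i) \<and> sg_hom (Gs ! i) (H i) (\<phi> i)"
    using choice[OF H_ex] by blast
  show thesis
  proof (rule that[of "map H [0..<length Gs]" \<phi>])
    show "\<forall>G\<in>set (map H [0..<length Gs]). signed_graph G"
    proof
      fix G assume "G \<in> set (map H [0..<length Gs])"
      then obtain i where "i < length Gs" "G = H i"
        by auto
      then show "signed_graph G"
        using H by blast
    qed
  qed (use H in simp_all)
qed

theorem corollary5p4:
  fixes Gs :: "'a sgraph list"
  assumes "\<forall>G\<in>set Gs. signed_graph G"
  shows "chi_s (cprod Gs) \<le> (\<Prod>i<length Gs. chi_s (Gs ! i))"
proof -
  obtain Hs :: "nat sgraph list" and \<phi> where Hs: "length Hs = length Gs" "\<forall>H\<in>set Hs. signed_graph H"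
    "\<And>i. i < length Gs \<Longrightarrow> card (verts (Hs ! i)) = chi_s (Gs ! i)"
    "\<And>i. i < length Gs \<Longrightarrow> sg_hom (Gs ! i) (Hs ! i) (\<phi> i)"
    using chi_s_attained_list[OF assms] by blast
  have "sg_hom (cprod Gs) (cprod Hs) (map_coords \<phi> (length Gs))"
    using Hs(1) assms Hs(2,4) by (rule sg_hom_cprod)
  then have "chi_s (cprod Gs) \<le> card (verts (cprod Hs))"
    using signed_graph_cprod[OF Hs(2)] by (intro chi_s_le)
  also have "\<dots> = (\<Prod>i<length Gs. chi_s (Gs ! i))"
    unfolding card_verts_cprod Hs(1) using Hs(3) by (intro prod.cong) simp_all
  finally show ?thesis .
qed

end
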